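(* Let $r\ge 2$ be an even integer and let $u(x,t)$ be a sufficiently smooth (e.g. $C^3$) function on $[a,b]\times I$, $I$ a time interval, with $u(a,t)=u(b,t)=0$. Then the following are equivalent: (i) $u$ satisfies $$\big(|u_x|^{r-2}u_x\big)_{xt}+\big(|u_x|^{r-2}u_x\big)_x u_x+\Big(\big(|u_x|^{r-2}u_x\big)_x u\Big)_x=0;$$ (ii) there is a function $c(t)$ such that $$|u_x|^{r-2}u_{xt}+\frac1r|u_x|^r+|u_x|^{r-2}u_{xx}u=c(t);$$ (iii) there is a function $c(t)$ such that $$\big(|u_x|^{r-2}u_x\big)_t+\big(|u_x|^{r-2}u\,u_x\big)_x=\frac1r|u_x|^r+c(t).$$ (The functions $c(t)$ in (ii) and (iii) need not coincide.)
   Context: Subscripts denote partial derivatives. Equation (i) is called the $r$-Hunter-Saxton equation on $[a,b]$ with boundary conditions $u(a)=u(b)=0$. For $r=2$, (iii) reduces to the Hunter-Saxton equation $(u_t+uu_x)_x=\frac12u_x^2$ (up to the function $c(t)$). *)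

theory Defs
  imports "HOL-Analysis.Analysis"
begin

definition Dx :: "real set \<Rightarrow> (real \<Rightarrow> real \<Rightarrow> real) \<Rightarrow> real \<Rightarrow> real \<Rightarrow> real" where
  "Dx A f x t = vector_derivative (\<lambda>y. f y t) (at x within A)"

definition Dt :: "real set \<Rightarrow> (real \<Rightarrow> real \<Rightarrow> real) \<Rightarrow> real \<Rightarrow> real \<Rightarrow> real" where
  "Dt I f x t = vector_derivative (\<lambda>s. f x s) (at t within I)"

datatype dir = DirX | DirT

fun iterD :: "real set \<Rightarrow> real set \<Rightarrow> dir list \<Rightarrow> (real \<Rightarrow> real \<Rightarrow> real) \<Rightarrow> real \<Rightarrow> real \<Rightarrow> real" where
  "iterD A I [] f = f"
| "iterD A I (DirX # ds) f = Dx A (iterD A I ds f)"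
| "iterD A I (DirT # ds) f = Dt I (iterD A I ds f)"

definition C3_on :: "real set \<Rightarrow> real set \<Rightarrow> (real \<Rightarrow> real \<Rightarrow> real) \<Rightarrow> bool" where
  "C3_on A I u \<longleftrightarrow>
     (\<forall>ds. length ds \<le> 3 \<longrightarrow> continuous_on (A \<times> I) (\<lambda>(x, t). iterD A I ds u x t)) \<and>
     (\<forall>ds. length ds < 3 \<longrightarrow> (\<forall>x\<in>A. \<forall>t\<in>I.
        ((\<lambda>y. iterD A I ds u y t) has_vector_derivative iterD A I (DirX # ds) u x t) (at x within A) \<and>
        ((\<lambda>s. iterD A I ds u x s) has_vector_derivative iterD A I (DirT # ds) u x t) (at t within I)))"

end

(*
  Since r is even, |w|^(r-2) w = w^(r-1) for w = u_x; write r = n + 2 and let E be the left-hand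
  side of (ii). Differentiating, and using that the mixed partials of u_x commute (which is where
  C^3 is needed), the left-hand side of (i) is (n+1) E_x and the left-hand side of (iii) is
  (n+1) E + w^r / r. So (i) says that E does not depend on x, which is (ii), and (ii) and (iii)
  differ only by the factor n+1 in c.
*)
theory Submission
  imports Defs
begin

lemma interval_islimpt:
  fixes S :: "real set"
  assumes "is_interval S" "\<exists>s\<in>S. \<exists>t\<in>S. s < t" "x \<in> S"
  shows "x islimpt S"
  using assms by (intro connected_imp_perfect) (auto simp: is_interval_connected_1)

lemma islimpt_interval_obtain_segment:
  fixes S :: "real set"
  assumes "is_interval S" "x \<in> S" "x islimpt S" "e > 0"
  obtains y where "y \<in> S" "y \<noteq> x" "dist y x < e" "closed_segment x y \<subseteq> S"
proof -
  obtain y where "y \<in> S" "y \<noteq> x" "dist y x < e"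
    using assms(3,4) islimpt_approachable by blast
  moreover have "closed_segment x y \<subseteq> S"
    using assms(1,2) \<open>y \<in> S\<close> by (simp add: closed_segment_subset is_interval_convex_1)
  ultimately show thesis using that by blast
qed

lemma mvt_closed_segment:
  fixes g g' :: "real \<Rightarrow> real"
  assumes "closed_segment p q \<subseteq> S"
    and "\<And>y. y \<in> closed_segment p q \<Longrightarrow> (g has_field_derivative g' y) (at y within S)"
  shows "\<exists>\<xi>\<in>closed_segment p q. g q - g p = g' \<xi> * (q - p)"
proof -
  have ordered: "\<exists>\<xi>\<in>{p..q}. g q - g p = g' \<xi> * (q - p)"
    if "p \<le> q" "\<And>y. y \<in> {p..q} \<Longrightarrow> (g has_field_derivative g' y) (at y within S)" "{p..q} \<subseteq> S"
    for p q
    using mvt_very_simple[of p q g "\<lambda>\<xi> h. g' \<xi> * h"] that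
    by (auto simp: has_field_derivative_def[symmetric] intro: DERIV_subset)
  show ?thesis
  proof (cases "p \<le> q")
    case True
    then show ?thesis using ordered[of p q] assms by (simp add: closed_segment_eq_real_ivl)
  next
    case False
    then obtain \<xi> where "\<xi> \<in> {q..p}" "g p - g q = g' \<xi> * (p - q)"
      using ordered[of q p] assms by (auto simp: closed_segment_eq_real_ivl)
    then show ?thesis using False by (intro bexI[of _ \<xi>]) (auto simp: closed_segment_eq_real_ivl algebra_simps)
  qed
qed

lemma second_difference_mean_value:
  fixes v vx vxt :: "real \<Rightarrow> real \<Rightarrow> real"
  assumes x: "closed_segment x0 x1 \<subseteq> A" and t: "closed_segment t0 t1 \<subseteq> I"
    and v_x: "\<And>x t. x \<in> A \<Longrightarrow> t \<in> I \<Longrightarrow> ((\<lambda>y. v y t) has_field_derivative vx x t) (at x within A)"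
    and vx_t: "\<And>x t. x \<in> A \<Longrightarrow> t \<in> I \<Longrightarrow> ((\<lambda>s. vx x s) has_field_derivative vxt x t) (at t within I)"
  shows "\<exists>\<xi>\<in>closed_segment x0 x1. \<exists>\<eta>\<in>closed_segment t0 t1.
           v x1 t1 - v x1 t0 - v x0 t1 + v x0 t0 = vxt \<xi> \<eta> * (x1 - x0) * (t1 - t0)"
proof -
  have "t0 \<in> I" "t1 \<in> I" using t ends_in_segment by blast+
  have diff_x: "((\<lambda>y. v y t1 - v y t0) has_field_derivative vx y t1 - vx y t0) (at y within A)"
    if "y \<in> closed_segment x0 x1" for y
    using v_x[OF subsetD[OF x that] \<open>t1 \<in> I\<close>] v_x[OF subsetD[OF x that] \<open>t0 \<in> I\<close>]
    by (rule DERIV_diff)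
  obtain \<xi> where \<xi>: "\<xi> \<in> closed_segment x0 x1"
    and \<xi>_eq: "(v x1 t1 - v x1 t0) - (v x0 t1 - v x0 t0) = (vx \<xi> t1 - vx \<xi> t0) * (x1 - x0)"
    using mvt_closed_segment[OF x diff_x] by blast
  have vx_t\<xi>: "(vx \<xi> has_field_derivative vxt \<xi> s) (at s within I)" if "s \<in> closed_segment t0 t1" for s
    using vx_t[OF subsetD[OF x \<xi>] subsetD[OF t that]] .
  obtain \<eta> where \<eta>: "\<eta> \<in> closed_segment t0 t1"
    and \<eta>_eq: "vx \<xi> t1 - vx \<xi> t0 = vxt \<xi> \<eta> * (t1 - t0)"
    using mvt_closed_segment[OF t vx_t\<xi>] by blast
  have "v x1 t1 - v x1 t0 - v x0 t1 + v x0 t0 = vxt \<xi> \<eta> * (x1 - x0) * (t1 - t0)"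
    using \<xi>_eq unfolding \<eta>_eq by (simp add: algebra_simps)
  then show ?thesis using \<xi> \<eta> by blast
qed

lemma continuous_within_eq_if_coincide_nearby:
  fixes f g :: "'a::metric_space \<Rightarrow> 'b::metric_space"
  assumes f: "continuous (at z within S) f" and g: "continuous (at z within S) g"
    and near: "\<And>d. d > 0 \<Longrightarrow> \<exists>p\<in>S. \<exists>q\<in>S. dist p z < d \<and> dist q z < d \<and> f p = g q"
  shows "f z = g z"
proof (rule ccontr)
  assume "f z \<noteq> g z"
  define e where "e = dist (f z) (g z) / 2"
  have "e > 0" using \<open>f z \<noteq> g z\<close> by (simp add: e_def)
  obtain d1 where "d1 > 0" and d1: "\<And>p. p \<in> S \<Longrightarrow> dist p z < d1 \<Longrightarrow> dist (f p) (f z) < e"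
    using f \<open>e > 0\<close> unfolding continuous_within_eps_delta by blast
  obtain d2 where "d2 > 0" and d2: "\<And>q. q \<in> S \<Longrightarrow> dist q z < d2 \<Longrightarrow> dist (g q) (g z) < e"
    using g \<open>e > 0\<close> unfolding continuous_within_eps_delta by blast
  obtain p q where "p \<in> S" "q \<in> S" "dist p z < d1" "dist q z < d2" "f p = g q"
    using near[of "min d1 d2"] \<open>d1 > 0\<close> \<open>d2 > 0\<close> by auto
  then have "dist (f p) (f z) < e" "dist (g q) (g z) < e"
    using d1[of p] d2[of q] by blast+
  then have "dist (f z) (g z) < e + e"
    using dist_triangle3[of "f z" "g z" "f p"] \<open>f p = g q\<close> by (simp add: dist_commute)
  then show False by (simp add: e_def)
qed

lemma mixed_partials_commute:
  fixes v vx vt vxt vtx :: "real \<Rightarrow> real \<Rightarrow> real"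
  assumes A: "is_interval A" "x0 \<in> A" "x0 islimpt A"
    and I: "is_interval I" "t0 \<in> I" "t0 islimpt I"
    and v_x: "\<And>x t. x \<in> A \<Longrightarrow> t \<in> I \<Longrightarrow> ((\<lambda>y. v y t) has_field_derivative vx x t) (at x within A)"
    and v_t: "\<And>x t. x \<in> A \<Longrightarrow> t \<in> I \<Longrightarrow> ((\<lambda>s. v x s) has_field_derivative vt x t) (at t within I)"
    and vx_t: "\<And>x t. x \<in> A \<Longrightarrow> t \<in> I \<Longrightarrow> ((\<lambda>s. vx x s) has_field_derivative vxt x t) (at t within I)"
    and vt_x: "\<And>x t. x \<in> A \<Longrightarrow> t \<in> I \<Longrightarrow> ((\<lambda>y. vt y t) has_field_derivative vtx x t) (at x within A)"
    and "continuous (at (x0, t0) within A \<times> I) (\<lambda>(x, t). vxt x t)"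
    and "continuous (at (x0, t0) within A \<times> I) (\<lambda>(x, t). vtx x t)"
  shows "vxt x0 t0 = vtx x0 t0"
proof -
  txt \<open>On every small rectangle with corner \<open>(x0, t0)\<close> the second difference of \<open>v\<close>, divided
    by the area, is a value of \<open>vxt\<close> and also a value of \<open>vtx\<close>.\<close>
  have "(\<lambda>(x, t). vxt x t) (x0, t0) = (\<lambda>(x, t). vtx x t) (x0, t0)"
  proof (rule continuous_within_eq_if_coincide_nearby[OF assms(11,12)])
    fix d :: real
    assume "d > 0"
    then obtain x1 where x1: "x1 \<noteq> x0" "dist x1 x0 < d / 2" "closed_segment x0 x1 \<subseteq> A"
      using islimpt_interval_obtain_segment[OF A, of "d / 2"] by auto
    obtain t1 where t1: "t1 \<noteq> t0" "dist t1 t0 < d / 2" "closed_segment t0 t1 \<subseteq> I"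
      using islimpt_interval_obtain_segment[OF I, of "d / 2"] \<open>d > 0\<close> by auto
    have near: "(\<xi>, \<eta>) \<in> A \<times> I \<and> dist (\<xi>, \<eta>) (x0, t0) < d"
      if "\<xi> \<in> closed_segment x0 x1" "\<eta> \<in> closed_segment t0 t1" for \<xi> \<eta>
    proof -
      have "dist \<xi> x0 < d / 2" "dist \<eta> t0 < d / 2"
        using dist_in_closed_segment[OF that(1)] dist_in_closed_segment[OF that(2)] x1 t1
        by (simp_all add: dist_commute)
      then have "dist (\<xi>, \<eta>) (x0, t0) < d"
        unfolding dist_Pair_Pair using sqrt_sum_squares_le_sum_abs[of "dist \<xi> x0" "dist \<eta> t0"] by simp
      then show ?thesis using that x1(3) t1(3) by auto
    qed
    obtain \<xi> \<eta> where \<xi>\<eta>: "\<xi> \<in> closed_segment x0 x1" "\<eta> \<in> closed_segment t0 t1"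
      and vxt_eq: "v x1 t1 - v x1 t0 - v x0 t1 + v x0 t0 = vxt \<xi> \<eta> * (x1 - x0) * (t1 - t0)"
      using second_difference_mean_value[OF x1(3) t1(3) v_x vx_t] by blast
    obtain \<eta>' \<xi>' where \<xi>\<eta>': "\<eta>' \<in> closed_segment t0 t1" "\<xi>' \<in> closed_segment x0 x1"
      and vtx_eq: "v x1 t1 - v x0 t1 - v x1 t0 + v x0 t0 = vtx \<xi>' \<eta>' * (t1 - t0) * (x1 - x0)"
      using second_difference_mean_value[of t0 t1 I x0 x1 A "\<lambda>s y. v y s" "\<lambda>s y. vt y s" "\<lambda>s y. vtx y s"]
        t1(3) x1(3) v_t vt_x by blast
    have "vxt \<xi> \<eta> * ((x1 - x0) * (t1 - t0)) = vtx \<xi>' \<eta>' * ((x1 - x0) * (t1 - t0))"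
      using vxt_eq vtx_eq by (simp add: algebra_simps)
    then have "vxt \<xi> \<eta> = vtx \<xi>' \<eta>'"
      using x1(1) t1(1) by simp
    then show "\<exists>p\<in>A \<times> I. \<exists>q\<in>A \<times> I. dist p (x0, t0) < d \<and> dist q (x0, t0) < d \<and>
                 (\<lambda>(x, t). vxt x t) p = (\<lambda>(x, t). vtx x t) q"
      using near[OF \<xi>\<eta>] near[OF \<xi>\<eta>'(2,1)] by fastforce
  qed
  then show ?thesis by simp
qed

lemma Dx_eqI:
  assumes "x \<in> A" "x islimpt A" "\<And>y. y \<in> A \<Longrightarrow> f y t = g y"
    and "(g has_field_derivative D) (at x within A)"
  shows "Dx A f x t = D"
proof -
  have "((\<lambda>y. f y t) has_vector_derivative D) (at x within A)"
    using has_vector_derivative_transform[of x A "\<lambda>y. f y t" g] assms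
    by (simp add: has_real_derivative_iff_has_vector_derivative)
  then show ?thesis
    unfolding Dx_def using assms(2) by (simp add: vector_derivative_within trivial_limit_within)
qed

lemma Dt_eqI:
  assumes "t \<in> I" "t islimpt I" "\<And>s. s \<in> I \<Longrightarrow> f x s = g s"
    and "(g has_field_derivative D) (at t within I)"
  shows "Dt I f x t = D"
proof -
  have "((\<lambda>s. f x s) has_vector_derivative D) (at t within I)"
    using has_vector_derivative_transform[of t I "\<lambda>s. f x s" g] assms
    by (simp add: has_real_derivative_iff_has_vector_derivative)
  then show ?thesis
    unfolding Dt_def using assms(2) by (simp add: vector_derivative_within trivial_limit_within)
qed

lemma x_derivative_zero_iff_function_of_t:
  fixes f f' :: "real \<Rightarrow> real \<Rightarrow> real"
  assumes "is_interval A" "\<And>x. x \<in> A \<Longrightarrow> x islimpt A"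
    and f_x: "\<And>x t. x \<in> A \<Longrightarrow> t \<in> I \<Longrightarrow> ((\<lambda>y. f y t) has_field_derivative f' x t) (at x within A)"
  shows "(\<forall>x\<in>A. \<forall>t\<in>I. f' x t = 0) \<longleftrightarrow> (\<exists>c. \<forall>x\<in>A. \<forall>t\<in>I. f x t = c t)"
proof
  assume "\<forall>x\<in>A. \<forall>t\<in>I. f' x t = 0"
  then have "\<exists>c. \<forall>x\<in>A. f x t = c" if "t \<in> I" for t
    using f_x[OF _ that] that assms(1)
    by (intro has_field_derivative_zero_constant) (auto simp: is_interval_convex_1)
  then show "\<exists>c. \<forall>x\<in>A. \<forall>t\<in>I. f x t = c t"
    by metis
next
  assume "\<exists>c. \<forall>x\<in>A. \<forall>t\<in>I. f x t = c t"
  then obtain c where c: "\<And>x t. x \<in> A \<Longrightarrow> t \<in> I \<Longrightarrow> f x t = c t" by blast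
  show "\<forall>x\<in>A. \<forall>t\<in>I. f' x t = 0"
  proof (intro ballI)
    fix x t assume "x \<in> A" "t \<in> I"
    have "((\<lambda>y. f y t) has_field_derivative 0) (at x within A)"
      using has_field_derivative_transform_within[OF DERIV_const[of "c t"] zero_less_one \<open>x \<in> A\<close>]
        c \<open>t \<in> I\<close> by simp
    then show "f' x t = 0"
      using has_field_derivative_unique f_x[OF \<open>x \<in> A\<close> \<open>t \<in> I\<close>] assms(2)[OF \<open>x \<in> A\<close>]
      by (metis trivial_limit_within)
  qed
qed

lemma ex_function_of_t_cmult_iff:
  fixes f :: "real \<Rightarrow> real \<Rightarrow> real"
  assumes "a \<noteq> 0"
  shows "(\<exists>c. \<forall>x\<in>A. \<forall>t\<in>I. a * f x t = c t) \<longleftrightarrow> (\<exists>c. \<forall>x\<in>A. \<forall>t\<in>I. f x t = c t)"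
proof
  assume "\<exists>c. \<forall>x\<in>A. \<forall>t\<in>I. a * f x t = c t"
  then obtain c where c: "\<forall>x\<in>A. \<forall>t\<in>I. a * f x t = c t" ..
  show "\<exists>c. \<forall>x\<in>A. \<forall>t\<in>I. f x t = c t"
  proof (intro exI)
    show "\<forall>x\<in>A. \<forall>t\<in>I. f x t = c t / a"
      using c assms by (simp add: field_simps)
  qed
next
  assume "\<exists>c. \<forall>x\<in>A. \<forall>t\<in>I. f x t = c t"
  then obtain c where c: "\<forall>x\<in>A. \<forall>t\<in>I. f x t = c t" ..
  show "\<exists>c. \<forall>x\<in>A. \<forall>t\<in>I. a * f x t = c t"
  proof (intro exI)
    show "\<forall>x\<in>A. \<forall>t\<in>I. a * f x t = a * c t"
      using c by simp
  qed
qed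

lemma C3_on_second_order_partials:
  assumes C3: "C3_on A I u" and "is_interval A" "is_interval I"
    and A_limpt: "\<And>x. x \<in> A \<Longrightarrow> x islimpt A" and I_limpt: "\<And>t. t \<in> I \<Longrightarrow> t islimpt I"
    and "x \<in> A" "t \<in> I"
  shows "((\<lambda>y. u y t) has_field_derivative Dx A u x t) (at x within A)"
    and "((\<lambda>y. Dx A u y t) has_field_derivative Dx A (Dx A u) x t) (at x within A)"
    and "((\<lambda>s. Dx A u x s) has_field_derivative Dt I (Dx A u) x t) (at t within I)"
    and "((\<lambda>y. Dx A (Dx A u) y t) has_field_derivative Dx A (Dx A (Dx A u)) x t) (at x within A)"
    and "((\<lambda>s. Dx A (Dx A u) x s) has_field_derivative Dt I (Dx A (Dx A u)) x t) (at t within I)"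
    and "((\<lambda>y. Dt I (Dx A u) y t) has_field_derivative Dt I (Dx A (Dx A u)) x t) (at x within A)"
proof -
  have D: "((\<lambda>y. iterD A I ds u y t) has_field_derivative iterD A I (DirX # ds) u x t) (at x within A)"
    "((\<lambda>s. iterD A I ds u x s) has_field_derivative iterD A I (DirT # ds) u x t) (at t within I)"
    if "length ds < 3" "x \<in> A" "t \<in> I" for ds x t
    using C3 that unfolding C3_on_def has_real_derivative_iff_has_vector_derivative by blast+
  have cont: "continuous (at (x, t) within A \<times> I) (\<lambda>(x, t). iterD A I ds u x t)"
    if "length ds \<le> 3" "x \<in> A" "t \<in> I" for ds x t
    using C3 that unfolding C3_on_def by (simp add: continuous_on_eq_continuous_within)
  have mixed: "Dt I (Dx A (Dx A u)) x t = Dx A (Dt I (Dx A u)) x t"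
    using mixed_partials_commute[OF \<open>is_interval A\<close> \<open>x \<in> A\<close> A_limpt[OF \<open>x \<in> A\<close>]
        \<open>is_interval I\<close> \<open>t \<in> I\<close> I_limpt[OF \<open>t \<in> I\<close>], of "Dx A u" "Dx A (Dx A u)" "Dt I (Dx A u)"]
      D(1)[of "[DirX]"] D(2)[of "[DirX]"] D(2)[of "[DirX, DirX]"] D(1)[of "[DirT, DirX]"]
      cont[of "[DirT, DirX, DirX]"] cont[of "[DirX, DirT, DirX]"] \<open>x \<in> A\<close> \<open>t \<in> I\<close>
    by simp
  show "((\<lambda>y. u y t) has_field_derivative Dx A u x t) (at x within A)"
    and "((\<lambda>y. Dx A u y t) has_field_derivative Dx A (Dx A u) x t) (at x within A)"
    and "((\<lambda>s. Dx A u x s) has_field_derivative Dt I (Dx A u) x t) (at t within I)"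
    and "((\<lambda>y. Dx A (Dx A u) y t) has_field_derivative Dx A (Dx A (Dx A u)) x t) (at x within A)"
    and "((\<lambda>s. Dx A (Dx A u) x s) has_field_derivative Dt I (Dx A (Dx A u)) x t) (at t within I)"
    using D(1)[of "[]"] D(1)[of "[DirX]"] D(2)[of "[DirX]"] D(1)[of "[DirX, DirX]"]
      D(2)[of "[DirX, DirX]"] \<open>x \<in> A\<close> \<open>t \<in> I\<close>
    by simp_all
  show "((\<lambda>y. Dt I (Dx A u) y t) has_field_derivative Dt I (Dx A (Dx A u)) x t) (at x within A)"
    using D(1)[of "[DirT, DirX]"] mixed \<open>x \<in> A\<close> \<open>t \<in> I\<close> by simp
qed

text \<open>In the following context \<open>w\<close> plays the role of \<open>u\<^sub>x\<close>; the assumption \<open>wt_x\<close> builds in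
  the symmetry \<open>w\<^sub>t\<^sub>x = w\<^sub>x\<^sub>t\<close> of the mixed partials.\<close>

context
  fixes A I :: "real set" and u w wx wt wxx wxt :: "real \<Rightarrow> real \<Rightarrow> real"
  assumes A_interval: "is_interval A" and A_limpt: "\<And>x. x \<in> A \<Longrightarrow> x islimpt A"
    and I_limpt: "\<And>t. t \<in> I \<Longrightarrow> t islimpt I"
    and u_x: "\<And>x t. x \<in> A \<Longrightarrow> t \<in> I \<Longrightarrow> ((\<lambda>y. u y t) has_field_derivative w x t) (at x within A)"
    and w_x: "\<And>x t. x \<in> A \<Longrightarrow> t \<in> I \<Longrightarrow> ((\<lambda>y. w y t) has_field_derivative wx x t) (at x within A)"
    and w_t: "\<And>x t. x \<in> A \<Longrightarrow> t \<in> I \<Longrightarrow> ((\<lambda>s. w x s) has_field_derivative wt x t) (at t within I)"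
    and wx_x: "\<And>x t. x \<in> A \<Longrightarrow> t \<in> I \<Longrightarrow> ((\<lambda>y. wx y t) has_field_derivative wxx x t) (at x within A)"
    and wx_t: "\<And>x t. x \<in> A \<Longrightarrow> t \<in> I \<Longrightarrow> ((\<lambda>s. wx x s) has_field_derivative wxt x t) (at t within I)"
    and wt_x: "\<And>x t. x \<in> A \<Longrightarrow> t \<in> I \<Longrightarrow> ((\<lambda>y. wt y t) has_field_derivative wxt x t) (at x within A)"
begin

lemma Dx_power_Suc:
  assumes "x \<in> A" "t \<in> I"
  shows "Dx A (\<lambda>x t. w x t ^ n * w x t) x t = real (Suc n) * w x t ^ n * wx x t"
proof (rule Dx_eqI[OF assms(1) A_limpt[OF assms(1)]])
  show "((\<lambda>y. w y t ^ Suc n) has_field_derivative real (Suc n) * w x t ^ n * wx x t) (at x within A)"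
    by (rule derivative_eq_intros w_x assms | simp)+
qed (simp add: power_Suc2)

lemma Dt_power_Suc:
  assumes "x \<in> A" "t \<in> I"
  shows "Dt I (\<lambda>x t. w x t ^ n * w x t) x t = real (Suc n) * w x t ^ n * wt x t"
proof (rule Dt_eqI[OF assms(2) I_limpt[OF assms(2)]])
  show "((\<lambda>s. w x s ^ Suc n) has_field_derivative real (Suc n) * w x t ^ n * wt x t) (at t within I)"
    by (rule derivative_eq_intros w_t assms | simp)+
qed (simp add: power_Suc2)

lemma rHS_iff_integrated_form:
  "(\<forall>x\<in>A. \<forall>t\<in>I.
      Dt I (Dx A (\<lambda>x t. w x t ^ n * w x t)) x t
    + Dx A (\<lambda>x t. w x t ^ n * w x t) x t * w x t
    + Dx A (\<lambda>x t. Dx A (\<lambda>x t. w x t ^ n * w x t) x t * u x t) x t = 0)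
   \<longleftrightarrow>
   (\<exists>c. \<forall>x\<in>A. \<forall>t\<in>I.
      w x t ^ n * wt x t + 1 / real (n + 2) * w x t ^ (n + 2) + w x t ^ n * wx x t * u x t = c t)"
  (is "(\<forall>x\<in>A. \<forall>t\<in>I. ?rHS x t = 0) \<longleftrightarrow> _")
proof -
  define E where "E x t = w x t ^ n * wt x t + 1 / real (n + 2) * w x t ^ (n + 2) + w x t ^ n * wx x t * u x t" for x t
  define E' where "E' x t = real n * w x t ^ (n - 1) * wx x t * wt x t + w x t ^ n * wxt x t
    + w x t ^ Suc n * wx x t + (real n * w x t ^ (n - 1) * wx x t * wx x t + w x t ^ n * wxx x t) * u x t
    + w x t ^ n * wx x t * w x t" for x t
  have E_x: "((\<lambda>y. E y t) has_field_derivative E' x t) (at x within A)" if "x \<in> A" "t \<in> I" for x t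
    unfolding E_def E'_def
    by (rule derivative_eq_intros u_x w_x wx_x wt_x that | simp add: add_nonneg_eq_0_iff)+
  have flux_xt: "Dt I (Dx A (\<lambda>x t. w x t ^ n * w x t)) x t
      = real (Suc n) * (real n * w x t ^ (n - 1) * wt x t * wx x t + w x t ^ n * wxt x t)"
    if "x \<in> A" "t \<in> I" for x t
  proof (rule Dt_eqI[OF that(2) I_limpt[OF that(2)]])
    show "Dx A (\<lambda>x t. w x t ^ n * w x t) x s = real (Suc n) * w x s ^ n * wx x s" if "s \<in> I" for s
      using Dx_power_Suc \<open>x \<in> A\<close> that .
    show "((\<lambda>s. real (Suc n) * w x s ^ n * wx x s) has_field_derivative
        real (Suc n) * (real n * w x t ^ (n - 1) * wt x t * wx x t + w x t ^ n * wxt x t)) (at t within I)"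
      by (rule derivative_eq_intros w_t wx_t that | simp add: algebra_simps)+
  qed
  have flux_x_u_x: "Dx A (\<lambda>x t. Dx A (\<lambda>x t. w x t ^ n * w x t) x t * u x t) x t
      = real (Suc n) * ((real n * w x t ^ (n - 1) * wx x t * wx x t + w x t ^ n * wxx x t) * u x t
                        + w x t ^ n * wx x t * w x t)"
    if "x \<in> A" "t \<in> I" for x t
  proof (rule Dx_eqI[OF that(1) A_limpt[OF that(1)]])
    show "Dx A (\<lambda>x t. w x t ^ n * w x t) y t * u y t = real (Suc n) * w y t ^ n * wx y t * u y t"
      if "y \<in> A" for y
      using Dx_power_Suc \<open>t \<in> I\<close> that by simp
    show "((\<lambda>y. real (Suc n) * w y t ^ n * wx y t * u y t) has_field_derivative
        real (Suc n) * ((real n * w x t ^ (n - 1) * wx x t * wx x t + w x t ^ n * wxx x t) * u x t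
                        + w x t ^ n * wx x t * w x t)) (at x within A)"
      by (rule derivative_eq_intros u_x w_x wx_x that | simp add: algebra_simps)+
  qed
  have "?rHS x t = real (Suc n) * E' x t" if "x \<in> A" "t \<in> I" for x t
    unfolding flux_xt[OF that] flux_x_u_x[OF that] Dx_power_Suc[OF that] E'_def
    by (simp add: algebra_simps)
  then have "(\<forall>x\<in>A. \<forall>t\<in>I. ?rHS x t = 0) \<longleftrightarrow> (\<forall>x\<in>A. \<forall>t\<in>I. E' x t = 0)"
    by simp
  also have "\<dots> \<longleftrightarrow> (\<exists>c. \<forall>x\<in>A. \<forall>t\<in>I. E x t = c t)"
    by (rule x_derivative_zero_iff_function_of_t[OF A_interval A_limpt E_x])
  finally show ?thesis unfolding E_def .
qed

lemma integrated_form_iff_conservation_form: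
  "(\<exists>c. \<forall>x\<in>A. \<forall>t\<in>I.
      w x t ^ n * wt x t + 1 / real (n + 2) * w x t ^ (n + 2) + w x t ^ n * wx x t * u x t = c t)
   \<longleftrightarrow>
   (\<exists>c. \<forall>x\<in>A. \<forall>t\<in>I.
      Dt I (\<lambda>x t. w x t ^ n * w x t) x t + Dx A (\<lambda>x t. w x t ^ n * u x t * w x t) x t
      = 1 / real (n + 2) * w x t ^ (n + 2) + c t)"
  (is "_ \<longleftrightarrow> (\<exists>c. \<forall>x\<in>A. \<forall>t\<in>I. ?conservation x t = ?source x t + c t)")
proof -
  define E where "E x t = w x t ^ n * wt x t + 1 / real (n + 2) * w x t ^ (n + 2) + w x t ^ n * wx x t * u x t" for x t
  have flux_u_x: "Dx A (\<lambda>x t. w x t ^ n * u x t * w x t) x t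
      = real (Suc n) * w x t ^ n * wx x t * u x t + w x t ^ Suc n * w x t"
    if "x \<in> A" "t \<in> I" for x t
  proof (rule Dx_eqI[OF that(1) A_limpt[OF that(1)]])
    show "((\<lambda>y. w y t ^ Suc n * u y t) has_field_derivative
        real (Suc n) * w x t ^ n * wx x t * u x t + w x t ^ Suc n * w x t) (at x within A)"
      by (rule derivative_eq_intros u_x w_x that | simp add: algebra_simps)+
  qed (simp add: algebra_simps)
  have conservation_lhs: "?conservation x t = ?source x t + real (Suc n) * E x t"
    if "x \<in> A" "t \<in> I" for x t
    unfolding Dt_power_Suc[OF that] flux_u_x[OF that] E_def
    by (simp add: field_simps add_nonneg_eq_0_iff)
  have "(\<exists>c. \<forall>x\<in>A. \<forall>t\<in>I. E x t = c t) \<longleftrightarrow> (\<exists>c. \<forall>x\<in>A. \<forall>t\<in>I. real (Suc n) * E x t = c t)"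
    by (rule ex_function_of_t_cmult_iff[symmetric]) simp
  also have "\<dots> \<longleftrightarrow> (\<exists>c. \<forall>x\<in>A. \<forall>t\<in>I. ?conservation x t = ?source x t + c t)"
  proof -
    have "(\<forall>x\<in>A. \<forall>t\<in>I. real (Suc n) * E x t = c t)
        \<longleftrightarrow> (\<forall>x\<in>A. \<forall>t\<in>I. ?conservation x t = ?source x t + c t)" for c
      using conservation_lhs by auto
    then show ?thesis by (simp only:)
  qed
  finally show ?thesis unfolding E_def .
qed
end

theorem mainTheorem1:
  fixes r :: nat and a b :: real and I :: "real set" and u :: "real \<Rightarrow> real \<Rightarrow> real"
  assumes "r \<ge> 2" and "even r" and "a < b"
    and "is_interval I" and "\<exists>s\<in>I. \<exists>t\<in>I. s < t"
    and "C3_on {a..b} I u"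
    and "\<forall>t\<in>I. u a t = 0 \<and> u b t = 0"
  shows "((\<forall>x\<in>{a..b}. \<forall>t\<in>I.
             Dt I (Dx {a..b} (\<lambda>x t. \<bar>Dx {a..b} u x t\<bar> ^ (r - 2) * Dx {a..b} u x t)) x t
           + Dx {a..b} (\<lambda>x t. \<bar>Dx {a..b} u x t\<bar> ^ (r - 2) * Dx {a..b} u x t) x t * Dx {a..b} u x t
           + Dx {a..b} (\<lambda>x t. Dx {a..b} (\<lambda>x t. \<bar>Dx {a..b} u x t\<bar> ^ (r - 2) * Dx {a..b} u x t) x t
                                * u x t) x t = 0)
         \<longleftrightarrow>
          (\<exists>c :: real \<Rightarrow> real. \<forall>x\<in>{a..b}. \<forall>t\<in>I.
             \<bar>Dx {a..b} u x t\<bar> ^ (r - 2) * Dt I (Dx {a..b} u) x t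
           + 1 / real r * \<bar>Dx {a..b} u x t\<bar> ^ r
           + \<bar>Dx {a..b} u x t\<bar> ^ (r - 2) * Dx {a..b} (Dx {a..b} u) x t * u x t = c t))
       \<and>
         ((\<exists>c :: real \<Rightarrow> real. \<forall>x\<in>{a..b}. \<forall>t\<in>I.
             \<bar>Dx {a..b} u x t\<bar> ^ (r - 2) * Dt I (Dx {a..b} u) x t
           + 1 / real r * \<bar>Dx {a..b} u x t\<bar> ^ r
           + \<bar>Dx {a..b} u x t\<bar> ^ (r - 2) * Dx {a..b} (Dx {a..b} u) x t * u x t = c t)
         \<longleftrightarrow>
          (\<exists>c :: real \<Rightarrow> real. \<forall>x\<in>{a..b}. \<forall>t\<in>I.
             Dt I (\<lambda>x t. \<bar>Dx {a..b} u x t\<bar> ^ (r - 2) * Dx {a..b} u x t) x t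
           + Dx {a..b} (\<lambda>x t. \<bar>Dx {a..b} u x t\<bar> ^ (r - 2) * u x t * Dx {a..b} u x t) x t
           = 1 / real r * \<bar>Dx {a..b} u x t\<bar> ^ r + c t))"
proof -
  define n where "n = r - 2"
  define A where "A = {a..b}"
  have r: "r = n + 2" using assms(1) by (simp add: n_def)
  have "even n" using assms(2) r by simp
  then have abs_n: "\<bar>z\<bar> ^ n = z ^ n" and abs_r: "\<bar>z\<bar> ^ (n + 2) = z ^ (n + 2)" for z :: real
    by (simp_all add: power_even_abs)
  have A: "is_interval A" "\<And>x. x \<in> A \<Longrightarrow> x islimpt A"
    using assms(3) by (auto simp: A_def intro!: interval_islimpt)
  have I_limpt: "\<And>t. t \<in> I \<Longrightarrow> t islimpt I"
    using interval_islimpt assms(4,5) by blast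
  note partials = C3_on_second_order_partials[OF assms(6)[folded A_def] A(1) assms(4) A(2) I_limpt]
  show ?thesis
    unfolding A_def[symmetric] r add_diff_cancel_right' abs_n abs_r
    using rHS_iff_integrated_form[OF A I_limpt partials]
      integrated_form_iff_conservation_form[OF A I_limpt partials]
    by blast
qed

end
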